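(* Let $\mathcal{A}$ be a finite set of $m$ alternatives and $\mathcal{R}=(R_1,\dots,R_n)$ a sequence of reflexive binary relations on $\mathcal{A}$. Construct the weighted directed graph $G$ whose nodes are a source $s$, a sink $t$, one node for each alternative $a\in\mathcal{A}$, and one node $v_{(a,b)}$ for each ordered pair $(a,b)$ of distinct alternatives, with the following arcs: for each ordered pair $(a,b)$ of distinct alternatives, an arc $s\to v_{(a,b)}$ of weight $N(a,b)$, an arc $v_{(a,b)}\to t$ of weight $N(b,a)$, and arcs $a\to v_{(a,b)}$ and $v_{(a,b)}\to a$ each of weight $L$, where $L>(mn)^5$; and for each unordered pair $\{a,b\}$ of distinct alternatives, arcs $a\to b$ and $b\to a$ each of weight $E(a,b)=E(b,a)$. An $s$-$t$ cut is a partition $(A,B)$ of the node set with $s\in A$, $t\in B$; its capacity is the total weight of arcs from $A$ to $B$; a minimum cut is one of minimum capacity. Then: (1) If $(A,B)$ is a minimum cut, then the dichotomous weak order given by the ordered partition $(A\cap\mathcal{A},\,B\cap\mathcal{A})$ of the alternatives has cost equal to $\mathrm{MP}(\mathcal{R},2\text{-}\mathrm{WO})$. (2) If the dichotomous weak order given by $(A',B')$ has cost equal to $\mathrm{MP}(\mathcal{R},2\text{-}\mathrm{WO})$, then $(A,B)$ is a minimum cut, where $A$ consists of $s$, the nodes of the alternatives in $A'$, and the nodes $v_{(x,y)}$ with $x\in A'$, and $B$ consists of all remaining nodes.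
   Context: For alternatives $a,b\in\mathcal{A}$, let $N(a,b)$ be the number of indices $i$ with $(a,b)\in R_i$ and $(b,a)\notin R_i$, and $E(a,b)$ the number of indices $i$ with $(a,b)\in R_i$ and $(b,a)\in R_i$. A dichotomous weak order on $\mathcal{A}$ is given by an ordered partition $(A_1,A_2)$ of $\mathcal{A}$ (disjoint, union $\mathcal{A}$): every alternative of $A_1$ is strictly preferred to every alternative of $A_2$ and alternatives in the same part are tied. Its cost is $$\sum_{a\in A_1,\ b\in A_2}\big(2N(b,a)+E(b,a)\big)+\sum_{\{a,b\}:\ a\neq b,\ a,b\text{ in the same part}}\big(N(a,b)+N(b,a)\big),$$ the second sum over unordered pairs of distinct alternatives; $\mathrm{MP}(\mathcal{R},2\text{-}\mathrm{WO})$ denotes the minimum cost over all dichotomous weak orders on $\mathcal{A}$. *)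

theory Defs
  imports Complex_Main
begin

text \<open>Profile: a list Rs of binary relations; n = length Rs.\<close>

definition Ncnt :: "('a \<times> 'a) set list \<Rightarrow> 'a \<Rightarrow> 'a \<Rightarrow> nat" where
  "Ncnt Rs a b = card {i. i < length Rs \<and> (a, b) \<in> Rs ! i \<and> (b, a) \<notin> Rs ! i}"

definition Ecnt :: "('a \<times> 'a) set list \<Rightarrow> 'a \<Rightarrow> 'a \<Rightarrow> nat" where
  "Ecnt Rs a b = card {i. i < length Rs \<and> (a, b) \<in> Rs ! i \<and> (b, a) \<in> Rs ! i}"

text \<open>Cost of the dichotomous weak order with top part A1 and bottom part Alts - A1.
  The sum over unordered pairs {a,b} of N(a,b)+N(b,a) is written as the sum over
  ordered pairs (a,b), a \<noteq> b, of N(a,b).\<close>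
definition dwo_cost :: "('a \<times> 'a) set list \<Rightarrow> 'a set \<Rightarrow> 'a set \<Rightarrow> nat" where
  "dwo_cost Rs Alts A1 =
     (\<Sum>(a, b) \<in> A1 \<times> (Alts - A1). 2 * Ncnt Rs b a + Ecnt Rs b a)
   + (\<Sum>(a, b) \<in> {(a, b). a \<noteq> b \<and> ((a \<in> A1 \<and> b \<in> A1) \<or> (a \<in> Alts - A1 \<and> b \<in> Alts - A1))}.
        Ncnt Rs a b)"

definition MP_2WO :: "('a \<times> 'a) set list \<Rightarrow> 'a set \<Rightarrow> nat" where
  "MP_2WO Rs Alts = Min (dwo_cost Rs Alts ` Pow Alts)"

datatype 'a node = Src | Snk | Alt 'a | PairN 'a 'a

definition nodes :: "'a set \<Rightarrow> 'a node set" where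
  "nodes Alts = {Src, Snk} \<union> Alt ` Alts \<union> {PairN a b | a b. a \<in> Alts \<and> b \<in> Alts \<and> a \<noteq> b}"

text \<open>Arc weights (0 = no arc).\<close>
fun wt :: "('a \<times> 'a) set list \<Rightarrow> 'a set \<Rightarrow> real \<Rightarrow> 'a node \<Rightarrow> 'a node \<Rightarrow> real" where
  "wt Rs Alts L Src (PairN a b) = (if a \<in> Alts \<and> b \<in> Alts \<and> a \<noteq> b then real (Ncnt Rs a b) else 0)"
| "wt Rs Alts L (PairN a b) Snk = (if a \<in> Alts \<and> b \<in> Alts \<and> a \<noteq> b then real (Ncnt Rs b a) else 0)"
| "wt Rs Alts L (Alt x) (PairN a b) = (if a \<in> Alts \<and> b \<in> Alts \<and> a \<noteq> b \<and> x = a then L else 0)"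
| "wt Rs Alts L (PairN a b) (Alt x) = (if a \<in> Alts \<and> b \<in> Alts \<and> a \<noteq> b \<and> x = a then L else 0)"
| "wt Rs Alts L (Alt a) (Alt b) = (if a \<in> Alts \<and> b \<in> Alts \<and> a \<noteq> b then real (Ecnt Rs a b) else 0)"
| "wt Rs Alts L _ _ = 0"

text \<open>An s-t cut (S, nodes - S) is represented by its source side S.\<close>
definition is_cut :: "'a set \<Rightarrow> 'a node set \<Rightarrow> bool" where
  "is_cut Alts S \<longleftrightarrow> S \<subseteq> nodes Alts \<and> Src \<in> S \<and> Snk \<notin> S"

definition cut_cap :: "('a \<times> 'a) set list \<Rightarrow> 'a set \<Rightarrow> real \<Rightarrow> 'a node set \<Rightarrow> real" where
  "cut_cap Rs Alts L S = (\<Sum>(u, v) \<in> S \<times> (nodes Alts - S). wt Rs Alts L u v)"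

definition is_min_cut :: "('a \<times> 'a) set list \<Rightarrow> 'a set \<Rightarrow> real \<Rightarrow> 'a node set \<Rightarrow> bool" where
  "is_min_cut Rs Alts L S \<longleftrightarrow> is_cut Alts S \<and>
     (\<forall>S'. is_cut Alts S' \<longrightarrow> cut_cap Rs Alts L S \<le> cut_cap Rs Alts L S')"

end

theory Submission
  imports Defs
begin

(* A cut that puts Alt a and PairN a b on different sides pays an arc of weight L, while the cut
   of the order with empty top part costs less than L; so a minimum cut keeps each PairN a b on the side of
   Alt a and is determined by its set A of alternatives on the source side. For such a cut the
   ordered pair (a, b) contributes N(b,a) if a is in A and N(a,b) otherwise, plus E(a,b) if only a
   is in A. Adding the contributions of (a, b) and (b, a) gives exactly their joint share of the
   cost of the order (A, Alts - A), so cut capacity and order cost agree on these cuts. *)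

lemma finite_nodes:
  assumes "finite Alts"
  shows "finite (nodes Alts)"
proof (rule finite_subset)
  show "nodes Alts \<subseteq> {Src, Snk} \<union> Alt ` Alts \<union> (\<lambda>(a, b). PairN a b) ` (Alts \<times> Alts)"
    unfolding nodes_def by auto
qed (simp add: assms)

lemma Ecnt_commute: "Ecnt Rs a b = Ecnt Rs b a"
  unfolding Ecnt_def by (rule arg_cong[where f = card]) auto

lemma Ncnt_le_length: "Ncnt Rs a b \<le> length Rs"
proof -
  have "Ncnt Rs a b \<le> card {..<length Rs}"
    unfolding Ncnt_def by (rule card_mono) auto
  then show ?thesis by simp
qed

lemma sum_offdiag_eqI:
  fixes f g :: "'a \<times> 'a \<Rightarrow> 'b::{semidom_divide, semiring_char_0}"
  assumes "\<And>a b. a \<in> Alts \<Longrightarrow> b \<in> Alts \<Longrightarrow> a \<noteq> b \<Longrightarrow> f (a, b) + f (b, a) = g (a, b) + g (b, a)"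
  shows "sum f (Alts \<times> Alts - Id) = sum g (Alts \<times> Alts - Id)"
proof -
  have swap: "sum h (Alts \<times> Alts - Id) = (\<Sum>p \<in> Alts \<times> Alts - Id. h (prod.swap p))"
    for h :: "'a \<times> 'a \<Rightarrow> 'b"
    by (rule sum.reindex_bij_witness[of _ prod.swap prod.swap]) auto
  have "2 * sum f (Alts \<times> Alts - Id) = (\<Sum>p \<in> Alts \<times> Alts - Id. f p + f (prod.swap p))"
    using swap[of f] by (simp add: mult_2 sum.distrib)
  also have "\<dots> = (\<Sum>p \<in> Alts \<times> Alts - Id. g p + g (prod.swap p))"
    using assms by (intro sum.cong refl) (auto simp: Id_def)
  also have "\<dots> = 2 * sum g (Alts \<times> Alts - Id)"
    using swap[of g] by (simp add: mult_2 sum.distrib)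
  finally show ?thesis by simp
qed

definition arcs_of_pair :: "'a \<Rightarrow> 'a \<Rightarrow> ('a node \<times> 'a node) set" where
  "arcs_of_pair a b = {(Src, PairN a b), (PairN a b, Snk), (Alt a, PairN a b), (PairN a b, Alt a), (Alt a, Alt b)}"

lemma wt_nonzero_imp_arc:
  "wt Rs Alts L u v \<noteq> 0 \<Longrightarrow> (u, v) \<in> (\<Union>(a, b) \<in> Alts \<times> Alts - Id. arcs_of_pair a b)"
  by (cases u; cases v) (auto simp: arcs_of_pair_def split: if_splits)

lemma sum_over_arcs:
  assumes "finite Alts" and "\<And>u v. wt Rs Alts L u v = 0 \<Longrightarrow> g u v = 0"
  shows "(\<Sum>(u, v) \<in> nodes Alts \<times> nodes Alts. g u v) =
    (\<Sum>(a, b) \<in> Alts \<times> Alts - Id. g Src (PairN a b) + g (PairN a b) Snk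
       + g (Alt a) (PairN a b) + g (PairN a b) (Alt a) + g (Alt a) (Alt b))"
proof -
  let ?arcs = "\<Union>(a, b) \<in> Alts \<times> Alts - Id. arcs_of_pair a b"
  have "(\<Sum>(u, v) \<in> nodes Alts \<times> nodes Alts. g u v) = (\<Sum>(u, v) \<in> ?arcs. g u v)"
  proof (rule sum.mono_neutral_right)
    show "finite (nodes Alts \<times> nodes Alts)" using finite_nodes[OF assms(1)] by simp
    show "?arcs \<subseteq> nodes Alts \<times> nodes Alts" by (auto simp: arcs_of_pair_def nodes_def)
    show "\<forall>p \<in> nodes Alts \<times> nodes Alts - ?arcs. (case p of (u, v) \<Rightarrow> g u v) = 0"
      using wt_nonzero_imp_arc assms(2) by fast
  qed
  also have "\<dots> = (\<Sum>(a, b) \<in> Alts \<times> Alts - Id. \<Sum>(u, v) \<in> arcs_of_pair a b. g u v)"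
    unfolding split_beta
    by (rule sum.UNION_disjoint) (use assms(1) in \<open>auto simp: arcs_of_pair_def\<close>)
  also have "\<dots> = (\<Sum>(a, b) \<in> Alts \<times> Alts - Id. g Src (PairN a b) + g (PairN a b) Snk
       + g (Alt a) (PairN a b) + g (PairN a b) (Alt a) + g (Alt a) (Alt b))"
    by (rule sum.cong) (auto simp: arcs_of_pair_def add.assoc)
  finally show ?thesis .
qed

lemma cut_cap_eq:
  assumes "finite Alts" and "is_cut Alts S"
  shows "cut_cap Rs Alts L S = (\<Sum>(a, b) \<in> Alts \<times> Alts - Id.
      (if PairN a b \<in> S then real (Ncnt Rs b a) else real (Ncnt Rs a b))
    + (if (Alt a \<in> S) = (PairN a b \<in> S) then 0 else L)
    + (if Alt a \<in> S \<and> Alt b \<notin> S then real (Ecnt Rs a b) else 0))"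
  (is "_ = ?rhs")
proof -
  let ?g = "\<lambda>u v. if u \<in> S \<and> v \<notin> S then wt Rs Alts L u v else 0"
  have "S \<times> (nodes Alts - S) = {p \<in> nodes Alts \<times> nodes Alts. fst p \<in> S \<and> snd p \<notin> S}"
    using assms(2) unfolding is_cut_def by auto
  then have "cut_cap Rs Alts L S = (\<Sum>(u, v) \<in> nodes Alts \<times> nodes Alts. ?g u v)"
    unfolding cut_cap_def using finite_nodes[OF assms(1)]
    by (simp add: sum.inter_filter split_beta)
  also have "\<dots> = (\<Sum>(a, b) \<in> Alts \<times> Alts - Id. ?g Src (PairN a b) + ?g (PairN a b) Snk
       + ?g (Alt a) (PairN a b) + ?g (PairN a b) (Alt a) + ?g (Alt a) (Alt b))"
    by (rule sum_over_arcs) (use assms(1) in auto)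
  also have "\<dots> = ?rhs"
    using assms(2) unfolding is_cut_def by (intro sum.cong refl) (auto simp: Id_def)
  finally show ?thesis .
qed

lemma cut_cap_ge_if_split_pair:
  assumes "finite Alts" and "is_cut Alts S" and "L \<ge> 0"
    and "a \<in> Alts" "b \<in> Alts" "a \<noteq> b" and "(Alt a \<in> S) \<noteq> (PairN a b \<in> S)"
  shows "L \<le> cut_cap Rs Alts L S"
proof -
  let ?f = "\<lambda>(a, b). (if PairN a b \<in> S then real (Ncnt Rs b a) else real (Ncnt Rs a b))
    + (if (Alt a \<in> S) = (PairN a b \<in> S) then 0 else L)
    + (if Alt a \<in> S \<and> Alt b \<notin> S then real (Ecnt Rs a b) else 0)"
  have "L \<le> ?f (a, b)" using assms(7) by simp
  also have "\<dots> \<le> (\<Sum>p \<in> Alts \<times> Alts - Id. ?f p)"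
    by (rule member_le_sum) (use assms in auto)
  also have "\<dots> = cut_cap Rs Alts L S"
    using cut_cap_eq[OF assms(1,2)] by simp
  finally show ?thesis .
qed

definition dwo_cut :: "'a set \<Rightarrow> 'a set \<Rightarrow> 'a node set" where
  "dwo_cut Alts A = {Src} \<union> Alt ` A \<union> {PairN x y | x y. x \<in> A \<and> y \<in> Alts \<and> x \<noteq> y}"

lemma is_cut_dwo_cut: "A \<subseteq> Alts \<Longrightarrow> is_cut Alts (dwo_cut Alts A)"
  unfolding is_cut_def dwo_cut_def nodes_def by auto

lemma dwo_cut_eqI:
  assumes "is_cut Alts S"
    and "\<And>a b. a \<in> Alts \<Longrightarrow> b \<in> Alts \<Longrightarrow> a \<noteq> b \<Longrightarrow> PairN a b \<in> S \<longleftrightarrow> Alt a \<in> S"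
  shows "S = dwo_cut Alts {a \<in> Alts. Alt a \<in> S}"
proof
  show "S \<subseteq> dwo_cut Alts {a \<in> Alts. Alt a \<in> S}"
  proof
    fix u assume "u \<in> S"
    moreover from this have "u \<in> nodes Alts" "u \<noteq> Snk"
      using assms(1) unfolding is_cut_def by auto
    ultimately show "u \<in> dwo_cut Alts {a \<in> Alts. Alt a \<in> S}"
      using assms(2) unfolding nodes_def dwo_cut_def by auto
  qed
  show "dwo_cut Alts {a \<in> Alts. Alt a \<in> S} \<subseteq> S"
    using assms unfolding dwo_cut_def is_cut_def by auto
qed

lemma dwo_cost_eq_sum_pairs:
  assumes "finite Alts" and "A \<subseteq> Alts"
  shows "dwo_cost Rs Alts A = (\<Sum>(a, b) \<in> Alts \<times> Alts - Id.
      (if a \<in> A then Ncnt Rs b a else Ncnt Rs a b)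
    + (if a \<in> A \<and> b \<notin> A then Ecnt Rs a b else 0))"
proof -
  have fin: "finite (Alts \<times> Alts - Id)" using assms(1) by simp
  have across: "(\<Sum>(a, b) \<in> A \<times> (Alts - A). f a b)
      = (\<Sum>(a, b) \<in> Alts \<times> Alts - Id. if a \<in> A \<and> b \<notin> A then f a b else 0)" for f
    by (rule sum.mono_neutral_cong_left) (use fin assms(2) in \<open>auto split: if_splits\<close>)
  have within: "(\<Sum>(a, b) \<in> {(a, b). a \<noteq> b \<and> ((a \<in> A \<and> b \<in> A) \<or> (a \<in> Alts - A \<and> b \<in> Alts - A))}. f a b)
      = (\<Sum>(a, b) \<in> Alts \<times> Alts - Id. if (a \<in> A) = (b \<in> A) then f a b else 0)" for f
    by (rule sum.mono_neutral_cong_left) (use fin assms(2) in \<open>auto split: if_splits\<close>)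
  show ?thesis
    unfolding dwo_cost_def across within sum.distrib[symmetric]
    by (rule sum_offdiag_eqI) (auto simp: Ecnt_commute)
qed

lemma cut_cap_dwo_cut:
  assumes "finite Alts" and "A \<subseteq> Alts"
  shows "cut_cap Rs Alts L (dwo_cut Alts A) = real (dwo_cost Rs Alts A)"
  unfolding cut_cap_eq[OF assms(1) is_cut_dwo_cut[OF assms(2)]] dwo_cost_eq_sum_pairs[OF assms] of_nat_sum
  by (intro sum.cong refl) (auto simp: dwo_cut_def Id_def)

lemma cut_eq_dwo_cut_if_cap_less:
  assumes "finite Alts" and "is_cut Alts S" and "L \<ge> 0" and "cut_cap Rs Alts L S < L"
  shows "S = dwo_cut Alts {a \<in> Alts. Alt a \<in> S}"
proof (rule dwo_cut_eqI[OF assms(2)])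
  fix a b assume "a \<in> Alts" "b \<in> Alts" "a \<noteq> b"
  then show "PairN a b \<in> S \<longleftrightarrow> Alt a \<in> S"
    using cut_cap_ge_if_split_pair[OF assms(1-3), of a b Rs] assms(4) by linarith
qed

lemma dwo_cost_empty_le: "finite Alts \<Longrightarrow> dwo_cost Rs Alts {} \<le> card Alts ^ 2 * length Rs"
proof -
  assume fin: "finite Alts"
  have "dwo_cost Rs Alts {} = (\<Sum>(a, b) \<in> Alts \<times> Alts - Id. Ncnt Rs a b)"
    using dwo_cost_eq_sum_pairs[OF fin, of "{}"] by simp
  also have "\<dots> \<le> card (Alts \<times> Alts - Id) * length Rs"
    using sum_bounded_above[of "Alts \<times> Alts - Id" "\<lambda>(a, b). Ncnt Rs a b"] by (simp add: Ncnt_le_length split_beta)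
  also have "\<dots> \<le> card (Alts \<times> Alts) * length Rs"
    using fin by (intro mult_right_mono card_mono) auto
  finally show ?thesis by (simp add: card_cartesian_product power2_eq_square)
qed

lemma MP_2WO_le: "finite Alts \<Longrightarrow> A \<subseteq> Alts \<Longrightarrow> MP_2WO Rs Alts \<le> dwo_cost Rs Alts A"
  unfolding MP_2WO_def by (intro Min_le) auto

lemma MP_2WO_eqI:
  assumes "finite Alts" and "A \<subseteq> Alts" and "\<And>B. B \<subseteq> Alts \<Longrightarrow> dwo_cost Rs Alts A \<le> dwo_cost Rs Alts B"
  shows "dwo_cost Rs Alts A = MP_2WO Rs Alts"
  unfolding MP_2WO_def using assms by (intro Min_eqI[symmetric]) auto

lemma min_cut_gives_optimal_dwo:
  assumes "finite Alts" and "real (dwo_cost Rs Alts {}) < L" and "is_min_cut Rs Alts L S"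
  shows "dwo_cost Rs Alts {a \<in> Alts. Alt a \<in> S} = MP_2WO Rs Alts"
proof (rule MP_2WO_eqI[OF assms(1)])
  let ?A = "{a \<in> Alts. Alt a \<in> S}"
  have L: "L \<ge> 0" using assms(2) by linarith
  have cut: "is_cut Alts S" and min: "\<And>S'. is_cut Alts S' \<Longrightarrow> cut_cap Rs Alts L S \<le> cut_cap Rs Alts L S'"
    using assms(3) unfolding is_min_cut_def by auto
  have "cut_cap Rs Alts L S < L"
    using min[OF is_cut_dwo_cut[of "{}" Alts]] cut_cap_dwo_cut[OF assms(1), of "{}"] assms(2) by simp
  then have "S = dwo_cut Alts ?A"
    by (rule cut_eq_dwo_cut_if_cap_less[OF assms(1) cut L])
  then have cap: "cut_cap Rs Alts L S = real (dwo_cost Rs Alts ?A)"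
    using cut_cap_dwo_cut[OF assms(1), of ?A] by simp
  show "?A \<subseteq> Alts" by blast
  fix B assume "B \<subseteq> Alts"
  then show "dwo_cost Rs Alts ?A \<le> dwo_cost Rs Alts B"
    using min[OF is_cut_dwo_cut] cut_cap_dwo_cut[OF assms(1)] cap by (metis of_nat_le_iff)
qed

lemma optimal_dwo_gives_min_cut:
  assumes "finite Alts" and "real (dwo_cost Rs Alts {}) < L"
    and "A \<subseteq> Alts" and "dwo_cost Rs Alts A = MP_2WO Rs Alts"
  shows "is_min_cut Rs Alts L (dwo_cut Alts A)"
  unfolding is_min_cut_def
proof (intro conjI allI impI)
  show "is_cut Alts (dwo_cut Alts A)" using is_cut_dwo_cut[OF assms(3)] .
  fix S assume cut: "is_cut Alts S"
  have L: "L \<ge> 0" using assms(2) by linarith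
  have cap: "cut_cap Rs Alts L (dwo_cut Alts A) = real (MP_2WO Rs Alts)"
    using cut_cap_dwo_cut[OF assms(1,3)] assms(4) by simp
  show "cut_cap Rs Alts L (dwo_cut Alts A) \<le> cut_cap Rs Alts L S"
  proof (cases "cut_cap Rs Alts L S < L")
    case True
    let ?B = "{a \<in> Alts. Alt a \<in> S}"
    have "S = dwo_cut Alts ?B"
      using cut_eq_dwo_cut_if_cap_less[OF assms(1) cut L True] .
    then show ?thesis
      using cap cut_cap_dwo_cut[OF assms(1), of ?B] MP_2WO_le[OF assms(1), of ?B Rs] by simp
  next
    case False
    then show ?thesis
      using cap assms(2) MP_2WO_le[OF assms(1), of "{}" Rs] by simp
  qed
qed

lemma square_mult_le_power5: "(m::nat) ^ 2 * n \<le> (m * n) ^ 5"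
proof (cases "n = 0")
  case False
  then have "m ^ 2 * n \<le> (m * n) ^ 2"
    by (simp add: power_mult_distrib power2_eq_square Suc_le_eq)
  also have "\<dots> \<le> (m * n) ^ 5"
    by (cases "m = 0") (use False in \<open>auto intro!: power_increasing simp: Suc_le_eq\<close>)
  finally show ?thesis .
qed simp

theorem mainTheorem2:
  fixes Alts :: "'a set" and Rs :: "('a \<times> 'a) set list" and L :: real
  assumes "finite Alts"
    and "\<forall>i < length Rs. Rs ! i \<subseteq> Alts \<times> Alts \<and> refl_on Alts (Rs ! i)"
    and "L > (real (card Alts * length Rs)) ^ 5"
  shows "(\<forall>S. is_min_cut Rs Alts L S \<longrightarrow>
            dwo_cost Rs Alts {a \<in> Alts. Alt a \<in> S} = MP_2WO Rs Alts)
       \<and> (\<forall>A'. A' \<subseteq> Alts \<and> dwo_cost Rs Alts A' = MP_2WO Rs Alts \<longrightarrow>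
            is_min_cut Rs Alts L
              ({Src} \<union> Alt ` A' \<union> {PairN x y | x y. x \<in> A' \<and> y \<in> Alts \<and> x \<noteq> y}))"
proof -
  have "dwo_cost Rs Alts {} \<le> (card Alts * length Rs) ^ 5"
    using dwo_cost_empty_le[OF assms(1), of Rs] square_mult_le_power5 order.trans by blast
  then have "real (dwo_cost Rs Alts {}) < L"
    using assms(3) by (metis of_nat_le_iff of_nat_power order.strict_trans1)
  then show ?thesis
    using min_cut_gives_optimal_dwo[OF assms(1)] optimal_dwo_gives_min_cut[OF assms(1)]
    unfolding dwo_cut_def by blast
qed

end
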